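(* Assume $\alpha\in[0,1)$. Then, almost surely, $$\lim_{n\to\infty}\mathbb{E}\big[(X_{n+1}-\mathbb{E}[X_{n+1}\mid\mathcal F_n])^2\,\big|\,\mathcal F_n\big]=\phi .$$ Moreover, if $0\le\alpha\le1/2$, then the predictable quadratic variation $\langle M\rangle_n=\sum_{k=1}^n\mathbb{E}[(\Delta M_k)^2\mid\mathcal F_{k-1}]$ of the martingale $M_n=\frac{S_n-\mathbb{E}[S_n]}{a_n}$ (with $M_0=0$, $\mathcal F_0$ trivial, $\Delta M_k=M_k-M_{k-1}$) satisfies $\lim_{n\to\infty}\frac{\langle M\rangle_n}{v_n}=\phi$ almost surely, where $v_n=\sum_{k=1}^n a_k^{-2}$.
   Context: Fix $p,q,r\ge 0$ with $p+q+r=1$ and $\theta\in[0,1)$. Let $(X_n)_{n\ge1}$ be random variables with values in $\{-1,0,+1\}$ such that $\mathbb{P}(X_1=+1)=p$, $\mathbb{P}(X_1=-1)=q$, $\mathbb{P}(X_1=0)=r$. Let $\mathcal F_n=\sigma(X_1,\dots,X_n)$. For $n\ge1$ let $n_+,n_-,n_0$ denote the number of indices $i\in\{1,\dots,n\}$ with $X_i=+1$, $X_i=-1$, $X_i=0$ respectively. The conditional law of $X_{n+1}$ is $\mathbb{P}(X_{n+1}=+1\mid\mathcal F_n)=\theta\big(\tfrac{n_+}{n}p+\tfrac{n_-}{n}q\big)+(1-\theta)p$, $\mathbb{P}(X_{n+1}=-1\mid\mathcal F_n)=\theta\big(\tfrac{n_-}{n}p+\tfrac{n_+}{n}q\big)+(1-\theta)q$,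 $\mathbb{P}(X_{n+1}=0\mid\mathcal F_n)=\theta(p+q)\tfrac{n_0}{n}+r$. Set $S_0=0$, $S_n=\sum_{i=1}^n X_i$. Notation: $\alpha=(p-q)\theta$, $\omega=(p-q)(1-\theta)$, $\tau=(1-\theta)(p+q)$, $\gamma=(p+q)\theta$, $\phi=\frac{\tau}{1-\gamma}-\left(\frac{\omega}{1-\alpha}\right)^2$. Let $a_1=1$ and $a_n=\prod_{k=1}^{n-1}\left(1+\frac{\alpha}{k}\right)$ for $n\ge2$. *)

theory Defs
  imports "HOL-Probability.Probability"
begin

definition nat_filt :: "'a measure \<Rightarrow> (nat \<Rightarrow> 'a \<Rightarrow> real) \<Rightarrow> nat \<Rightarrow> 'a measure" where
  "nat_filt M X n = sigma (space M) (\<Union>i\<in>{1..n}. {X i -` A \<inter> space M | A. A \<in> sets borel})"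

definition cnt :: "(nat \<Rightarrow> 'a \<Rightarrow> real) \<Rightarrow> real \<Rightarrow> nat \<Rightarrow> 'a \<Rightarrow> nat" where
  "cnt X c n \<omega> = card {i\<in>{1..n}. X i \<omega> = c}"

definition partial_sum :: "(nat \<Rightarrow> 'a \<Rightarrow> real) \<Rightarrow> nat \<Rightarrow> 'a \<Rightarrow> real" where
  "partial_sum X n \<omega> = (\<Sum>i\<in>{1..n}. X i \<omega>)"

definition a_seq :: "real \<Rightarrow> nat \<Rightarrow> real" where
  "a_seq \<alpha> n = (\<Prod>k\<in>{1..<n}. 1 + \<alpha> / real k)"

definition mart :: "'a measure \<Rightarrow> (nat \<Rightarrow> 'a \<Rightarrow> real) \<Rightarrow> real \<Rightarrow> nat \<Rightarrow> 'a \<Rightarrow> real" where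
  "mart M X \<alpha> n \<omega> = (if n = 0 then 0
     else (partial_sum X n \<omega> - (\<integral>\<omega>'. partial_sum X n \<omega>' \<partial>M)) / a_seq \<alpha> n)"

definition qvar :: "'a measure \<Rightarrow> (nat \<Rightarrow> 'a \<Rightarrow> real) \<Rightarrow> real \<Rightarrow> nat \<Rightarrow> 'a \<Rightarrow> real" where
  "qvar M X \<alpha> n \<omega> = (\<Sum>k\<in>{1..n}. real_cond_exp M (nat_filt M X (k - 1))
       (\<lambda>\<omega>'. (mart M X \<alpha> k \<omega>' - mart M X \<alpha> (k - 1) \<omega>')^2) \<omega>)"

end

theory Submission
  imports Defs
begin

text \<open>Given \<open>F\<^sub>n\<close>, the step \<open>X\<^sub>n\<^sub>+\<^sub>1\<close> has conditional mean \<open>\<alpha> S\<^sub>n/n + \<omega>\<^sub>0\<close> and conditional second moment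
  \<open>\<gamma> (1 - N\<^sub>n/n) + \<tau>\<close>, where \<open>N\<^sub>n\<close> counts the zero steps. Both \<open>Z = X\<close> and \<open>Z = 1{X = 0}\<close> satisfy
  \<open>E[Z\<^sub>n\<^sub>+\<^sub>1 | F\<^sub>n] = g \<cdot> (Z\<^sub>1 + \<dots> + Z\<^sub>n)/n + c\<close> with \<open>|g| < 1\<close>. The innovations of such a sequence are
  bounded and orthogonal, so a fourth-moment strong law makes their averages vanish, and the averages
  \<open>y\<^sub>n\<close> of \<open>Z\<close> then obey a deterministic recursion forcing \<open>y\<^sub>n \<rightarrow> c/(1 - g)\<close>. Hence
  \<open>S\<^sub>n/n \<rightarrow> \<omega>\<^sub>0/(1 - \<alpha>)\<close> and \<open>N\<^sub>n/n \<rightarrow> r/(1 - \<gamma>)\<close> almost surely, and the conditional variance tends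
  to \<open>\<phi>\<close>. For the martingale, \<open>\<Delta>M\<^sub>k\<^sub>+\<^sub>1 = (X\<^sub>k\<^sub>+\<^sub>1 - E[X\<^sub>k\<^sub>+\<^sub>1 | F\<^sub>k]) / a\<^sub>k\<^sub>+\<^sub>1\<close>, so \<open>\<langle>M\<rangle>\<^sub>n / v\<^sub>n\<close> is
  a weighted mean of the conditional variances with weights \<open>a\<^sub>k\<^sup>-\<^sup>2\<close>; for \<open>\<alpha> \<le> 1/2\<close> we have
  \<open>a\<^sub>k\<^sup>2 \<le> 2k\<close>, the weights are not summable, and Toeplitz's lemma applies.\<close>

section \<open>Deterministic lemmas on averages\<close>

lemma averaging_recursion_eventually_bound:
  fixes z e :: "nat \<Rightarrow> real"
  assumes rec: "\<And>n. n \<ge> 1 \<Longrightarrow> z n = g * (\<Sum>k\<in>{1..<n}. z k) / real n + e n"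
    and e: "e \<longlonglongrightarrow> 0"
    and bound: "eventually (\<lambda>n. \<bar>z n\<bar> \<le> b) sequentially"
    and b: "b \<ge> 0" and \<eta>: "\<eta> > 0"
  shows "eventually (\<lambda>n. \<bar>z n\<bar> \<le> \<bar>g\<bar> * b + \<eta>) sequentially"
proof -
  obtain N where N: "\<And>n. n \<ge> N \<Longrightarrow> \<bar>z n\<bar> \<le> b"
    using bound unfolding eventually_sequentially by blast
  define K where "K = (\<Sum>k<N. \<bar>z k\<bar>)"
  have K: "K \<ge> 0" unfolding K_def by (simp add: sum_nonneg)
  have sum_bound: "\<bar>\<Sum>k\<in>{1..<n}. z k\<bar> \<le> K + real n * b" for n
  proof -
    have "\<bar>\<Sum>k\<in>{1..<n}. z k\<bar> \<le> (\<Sum>k<max n N. \<bar>z k\<bar>)"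
      by (rule order.trans[OF sum_abs sum_mono2]) auto
    also have "\<dots> = K + (\<Sum>k\<in>{N..<max n N}. \<bar>z k\<bar>)"
      using sum.atLeastLessThan_concat[of 0 N "max n N" "\<lambda>k. \<bar>z k\<bar>"]
      by (simp add: K_def atLeast0LessThan)
    also have "(\<Sum>k\<in>{N..<max n N}. \<bar>z k\<bar>) \<le> (\<Sum>k\<in>{N..<max n N}. b)"
      by (rule sum_mono) (use N in auto)
    also have "\<dots> \<le> real n * b" using b by (cases "n \<le> N") (auto intro: mult_right_mono)
    finally show ?thesis by simp
  qed
  have "(\<lambda>n. \<bar>g\<bar> * K / real n) \<longlonglongrightarrow> 0"
    by (intro tendsto_divide_0[OF tendsto_const]
        filterlim_at_top_imp_at_infinity[OF filterlim_real_sequentially])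
  then have small_K: "eventually (\<lambda>n. \<bar>g\<bar> * K / real n < \<eta>/2) sequentially"
    using \<eta> by (auto dest!: order_tendstoD(2)[where a="\<eta>/2"])
  have small_e: "eventually (\<lambda>n. \<bar>e n\<bar> < \<eta>/2) sequentially"
    using tendstoD[OF e, of "\<eta>/2"] \<eta> by (simp add: dist_real_def)
  show ?thesis
    using small_e small_K eventually_ge_at_top[of 1]
  proof eventually_elim
    case (elim n)
    then have n: "real n > 0" by simp
    have "\<bar>z n\<bar> \<le> \<bar>g\<bar> * \<bar>\<Sum>k\<in>{1..<n}. z k\<bar> / real n + \<bar>e n\<bar>"
      using rec[of n] elim by (simp add: abs_mult) (metis abs_divide abs_mult abs_of_nat abs_triangle_ineq)
    also have "\<bar>g\<bar> * \<bar>\<Sum>k\<in>{1..<n}. z k\<bar> / real n \<le> \<bar>g\<bar> * (K + real n * b) / real n"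
      by (intro divide_right_mono mult_left_mono sum_bound) auto
    also have "\<dots> = \<bar>g\<bar> * K / real n + \<bar>g\<bar> * b" using n by (simp add: field_simps)
    finally show ?case using elim by linarith
  qed
qed

text \<open>Iterating the previous lemma shrinks the eventual bound geometrically, since \<open>\<bar>g\<bar> < 1\<close>.\<close>
lemma averaging_recursion_tendsto_zero:
  fixes z e :: "nat \<Rightarrow> real"
  assumes g: "\<bar>g\<bar> < 1"
    and bounded: "\<And>n. \<bar>z n\<bar> \<le> B"
    and rec: "\<And>n. n \<ge> 1 \<Longrightarrow> z n = g * (\<Sum>k\<in>{1..<n}. z k) / real n + e n"
    and e: "e \<longlonglongrightarrow> 0"
  shows "z \<longlonglongrightarrow> 0"
proof (rule LIMSEQ_I)
  fix \<epsilon> :: real assume \<epsilon>: "\<epsilon> > 0"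
  have B: "B \<ge> 0" using bounded[of 0] by linarith
  have shrink: "eventually (\<lambda>n. \<bar>z n\<bar> \<le> \<bar>g\<bar>^m * B + \<epsilon>/2) sequentially" for m
  proof (induction m)
    case 0
    show ?case using bounded \<epsilon> by (simp add: add_increasing2)
  next
    case (Suc m)
    have "eventually (\<lambda>n. \<bar>z n\<bar> \<le> \<bar>g\<bar> * (\<bar>g\<bar>^m * B + \<epsilon>/2) + (1 - \<bar>g\<bar>) * (\<epsilon>/2)) sequentially"
      by (rule averaging_recursion_eventually_bound[OF rec e Suc]) (use B \<epsilon> g in auto)
    then show ?case by (simp add: algebra_simps add_divide_distrib diff_divide_distrib)
  qed
  have "(\<lambda>m. \<bar>g\<bar>^m * B) \<longlonglongrightarrow> 0"
    using tendsto_mult_left_zero[OF LIMSEQ_power_zero[of "\<bar>g\<bar>"]] g by simp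
  then obtain m where m: "\<bar>g\<bar>^m * B < \<epsilon>/2"
    using \<epsilon> by (metis (lifting) order_tendstoD(2) eventually_sequentially half_gt_zero order.refl)
  from shrink[of m] obtain N where "\<And>n. n \<ge> N \<Longrightarrow> \<bar>z n\<bar> \<le> \<bar>g\<bar>^m * B + \<epsilon>/2"
    unfolding eventually_sequentially by blast
  then show "\<exists>N. \<forall>n\<ge>N. norm (z n - 0) < \<epsilon>" using m by force
qed

lemma averaging_recursion_tendsto:
  fixes y e :: "nat \<Rightarrow> real"
  assumes g: "\<bar>g\<bar> < 1"
    and bounded: "\<And>n. \<bar>y n\<bar> \<le> B"
    and rec: "\<And>n. n \<ge> 1 \<Longrightarrow> y n = g * (\<Sum>k\<in>{1..<n}. y k) / real n + e n"
    and e: "e \<longlonglongrightarrow> c"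
  shows "y \<longlonglongrightarrow> c / (1 - g)"
proof -
  define L where "L = c / (1 - g)"
  have cL: "c = L - g * L"
    using g by (simp add: L_def divide_simps) (simp add: algebra_simps)
  define e' where "e' n = e n + g * L * ((real n - 1) / real n) - L" for n
  have rec': "y n - L = g * (\<Sum>k\<in>{1..<n}. y k - L) / real n + e' n" if n: "n \<ge> 1" for n
  proof -
    have sum_eq: "(\<Sum>k\<in>{1..<n}. y k - L) = (\<Sum>k\<in>{1..<n}. y k) - (real n - 1) * L"
      using n by (simp add: sum_subtractf of_nat_diff)
    show ?thesis unfolding sum_eq e'_def using rec[OF n] n by (simp add: field_simps)
  qed
  have "(\<lambda>n. (real n - 1) / real n) \<longlonglongrightarrow> 1"
  proof (rule Lim_transform_eventually)
    show "(\<lambda>n. 1 - 1 / real n) \<longlonglongrightarrow> 1"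
      using tendsto_diff[OF tendsto_const lim_const_over_n[of 1]] by simp
    show "eventually (\<lambda>n. 1 - 1 / real n = (real n - 1) / real n) sequentially"
      using eventually_ge_at_top[of 1] by eventually_elim (auto simp: field_simps)
  qed
  then have "e' \<longlonglongrightarrow> c + g * L * 1 - L"
    unfolding e'_def by (intro tendsto_intros e)
  then have e'_lim: "e' \<longlonglongrightarrow> 0" using cL by simp
  have "\<bar>y n - L\<bar> \<le> B + \<bar>L\<bar>" for n using bounded[of n] by linarith
  then have "(\<lambda>n. y n - L) \<longlonglongrightarrow> 0"
    by (rule averaging_recursion_tendsto_zero[OF g _ rec' e'_lim])
  then have "(\<lambda>n. (y n - L) + L) \<longlonglongrightarrow> 0 + L" by (intro tendsto_intros)
  then show ?thesis unfolding L_def by simp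
qed

lemma weighted_sum_deviation_le:
  fixes w u :: "nat \<Rightarrow> real"
  assumes w: "\<And>k. w k \<ge> 0" and N: "\<And>k. k \<ge> N \<Longrightarrow> \<bar>u k - c\<bar> \<le> \<epsilon>"
  shows "\<bar>(\<Sum>k\<in>{1..n}. w k * u k) - c * (\<Sum>k\<in>{1..n}. w k)\<bar>
    \<le> (\<Sum>k<N. w k * \<bar>u k - c\<bar>) + \<epsilon> * (\<Sum>k\<in>{1..n}. w k)"
proof -
  have \<epsilon>: "\<epsilon> \<ge> 0" using N[of N] by linarith
  have "\<bar>(\<Sum>k\<in>{1..n}. w k * u k) - c * (\<Sum>k\<in>{1..n}. w k)\<bar> = \<bar>\<Sum>k\<in>{1..n}. w k * (u k - c)\<bar>"
    by (simp add: sum_distrib_left algebra_simps sum_subtractf)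
  also have "\<dots> \<le> (\<Sum>k\<in>{1..n}. w k * \<bar>u k - c\<bar>)"
    using sum_abs[of "\<lambda>k. w k * (u k - c)" "{1..n}"] w by (simp add: abs_mult)
  also have "\<dots> = (\<Sum>k\<in>{1..n} \<inter> {..<N}. w k * \<bar>u k - c\<bar>) + (\<Sum>k\<in>{1..n} - {..<N}. w k * \<bar>u k - c\<bar>)"
    by (rule sum.Int_Diff) simp
  also have "(\<Sum>k\<in>{1..n} \<inter> {..<N}. w k * \<bar>u k - c\<bar>) \<le> (\<Sum>k<N. w k * \<bar>u k - c\<bar>)"
    by (rule sum_mono2) (use w in auto)
  also have "(\<Sum>k\<in>{1..n} - {..<N}. w k * \<bar>u k - c\<bar>) \<le> (\<Sum>k\<in>{1..n} - {..<N}. w k * \<epsilon>)"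
    using N w by (intro sum_mono mult_left_mono) auto
  also have "\<dots> \<le> (\<Sum>k\<in>{1..n}. w k * \<epsilon>)"
    by (rule sum_mono2) (use w \<epsilon> in auto)
  finally show ?thesis by (simp add: sum_distrib_left mult.commute)
qed

lemma weighted_mean_tendsto:
  fixes w u :: "nat \<Rightarrow> real"
  assumes w: "\<And>k. w k \<ge> 0"
    and W: "filterlim (\<lambda>n. \<Sum>k\<in>{1..n}. w k) at_top sequentially"
    and u: "u \<longlonglongrightarrow> c"
  shows "(\<lambda>n. (\<Sum>k\<in>{1..n}. w k * u k) / (\<Sum>k\<in>{1..n}. w k)) \<longlonglongrightarrow> c"
proof (rule LIMSEQ_I)
  fix \<epsilon> :: real assume \<epsilon>: "\<epsilon> > 0"
  define W where "W n = (\<Sum>k\<in>{1..n}. w k)" for n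
  obtain N where N: "\<And>k. k \<ge> N \<Longrightarrow> \<bar>u k - c\<bar> \<le> \<epsilon>/2"
    using tendstoD[OF u, of "\<epsilon>/2"] \<epsilon> unfolding eventually_sequentially dist_real_def
    by (auto intro: less_imp_le)
  define C where "C = (\<Sum>k<N. w k * \<bar>u k - c\<bar>)"
  have C: "C \<ge> 0" unfolding C_def using w by (simp add: sum_nonneg)
  obtain M where M: "\<And>n. n \<ge> M \<Longrightarrow> W n > 2 * C / \<epsilon>"
    using W unfolding W_def filterlim_at_top_dense eventually_sequentially by blast
  show "\<exists>M. \<forall>n\<ge>M. norm ((\<Sum>k\<in>{1..n}. w k * u k) / (\<Sum>k\<in>{1..n}. w k) - c) < \<epsilon>"
  proof (intro exI allI impI)
    fix n assume "n \<ge> M"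
    then have "2 * C < W n * \<epsilon>" using M \<epsilon> by (simp add: divide_less_eq)
    then have W_pos: "W n > 0" and C_less: "C < \<epsilon>/2 * W n"
      using C \<epsilon> by (simp_all add: zero_less_mult_iff mult.commute)
        (smt (verit) zero_less_mult_iff)
    have "\<bar>(\<Sum>k\<in>{1..n}. w k * u k) / W n - c\<bar> = \<bar>(\<Sum>k\<in>{1..n}. w k * u k) - c * W n\<bar> / W n"
      using W_pos by (simp add: field_simps)
    also have "\<dots> \<le> (C + \<epsilon>/2 * W n) / W n"
      using weighted_sum_deviation_le[where \<epsilon>="\<epsilon>/2" and n=n, OF w N] W_pos unfolding C_def W_def
      by (intro divide_right_mono) auto
    also have "\<dots> < \<epsilon>" using C_less W_pos by (simp add: field_simps)
    finally show "norm ((\<Sum>k\<in>{1..n}. w k * u k) / (\<Sum>k\<in>{1..n}. w k) - c) < \<epsilon>"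
      unfolding W_def by simp
  qed
qed

lemma a_seq_pos: "\<alpha> \<ge> 0 \<Longrightarrow> a_seq \<alpha> k > 0"
  unfolding a_seq_def by (intro prod_pos) (auto intro: add_pos_nonneg)

lemma a_seq_Suc: "k \<ge> 1 \<Longrightarrow> a_seq \<alpha> (Suc k) = a_seq \<alpha> k * (1 + \<alpha> / real k)"
  unfolding a_seq_def by (simp add: prod.atLeastLessThan_Suc)

text \<open>The factor \<open>(1 + \<alpha>/k)^2 \<le> (1 + 1/(2k))^2 \<le> (2k+1)/(2k-1)\<close> keeps the induction going.\<close>
lemma a_seq_square_le:
  assumes \<alpha>: "0 \<le> \<alpha>" "\<alpha> \<le> 1/2" and k: "k \<ge> 1"
  shows "a_seq \<alpha> k ^ 2 \<le> 2 * real k - 1"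
  using k
proof (induction k rule: dec_induct)
  case base
  then show ?case by (simp add: a_seq_def)
next
  case (step k)
  define x where "x = real k"
  have x: "x \<ge> 1" using step unfolding x_def by simp
  have "\<alpha> / x \<le> (1/2) / x"
    using \<alpha> x by (intro divide_right_mono) auto
  then have "1 + \<alpha> / x \<le> 1 + 1 / (2 * x)" by simp
  then have "(1 + \<alpha> / x)^2 \<le> (1 + 1 / (2 * x))^2"
    using \<alpha> x by (intro power_mono) auto
  then have "a_seq \<alpha> k ^ 2 * (1 + \<alpha> / x)^2 \<le> (2 * x - 1) * (1 + 1 / (2 * x))^2"
    using step.IH x unfolding x_def by (intro mult_mono) auto
  also have "\<dots> = (2 * x + 1) * ((4 * x^2 - 1) / (4 * x^2))"
    using x by (simp add: field_simps power2_eq_square)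
  also have "\<dots> \<le> 2 * x + 1"
    using x by (intro mult_left_le) auto
  finally show ?case
    using step.hyps unfolding a_seq_Suc[OF step.hyps(1)] x_def by (simp add: power_mult_distrib)
qed

lemma sum_inverse_a_seq_square_at_top:
  assumes "0 \<le> \<alpha>" "\<alpha> \<le> 1/2"
  shows "filterlim (\<lambda>n. \<Sum>k\<in>{1..n}. 1 / (a_seq \<alpha> k)^2) at_top sequentially"
proof (rule filterlim_at_top_mono)
  have ln_lim: "filterlim (\<lambda>n. ln (real n + 1)) at_top sequentially"
    by (rule filterlim_compose[OF ln_at_top filterlim_at_top_mono[OF filterlim_real_sequentially]])
      auto
  show "filterlim (\<lambda>n. 1/2 * ln (real n + 1)) at_top sequentially"
    by (rule filterlim_tendsto_pos_mult_at_top[OF tendsto_const _ ln_lim]) simp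
  have "1/2 * ln (real n + 1) \<le> harm n / 2" for n
    using ln_le_harm[of n] by simp
  also have "harm n / 2 = (\<Sum>k\<in>{1..n}. 1 / (2 * real k))" for n
    unfolding harm_def by (simp add: sum_divide_distrib field_simps)
  also have "(\<Sum>k\<in>{1..n}. 1 / (2 * real k)) \<le> (\<Sum>k\<in>{1..n}. 1 / (a_seq \<alpha> k)^2)" for n
  proof (rule sum_mono)
    fix k assume "k \<in> {1..n}"
    then show "1 / (2 * real k) \<le> 1 / (a_seq \<alpha> k)^2"
      using a_seq_square_le[OF assms, of k] a_seq_pos[OF assms(1), of k]
      by (intro divide_left_mono) auto
  qed
  finally show "eventually (\<lambda>n. 1/2 * ln (real n + 1) \<le> (\<Sum>k\<in>{1..n}. 1 / (a_seq \<alpha> k)^2)) sequentially"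
    by simp
qed

lemma sum_atLeastAtMost_split_first:
  assumes "n \<ge> 1"
  shows "(\<Sum>i\<in>{1..n}. f i) = f 1 + (\<Sum>k\<in>{1..<n}. f (Suc k))"
  using assms by (induction n rule: dec_induct) (simp_all add: sum.atLeastLessThan_Suc add.assoc)

lemma abs_average_le_1:
  fixes Z :: "nat \<Rightarrow> real"
  assumes "\<And>i. i \<ge> 1 \<Longrightarrow> \<bar>Z i\<bar> \<le> 1"
  shows "\<bar>(\<Sum>i\<in>{1..n}. Z i) / real n\<bar> \<le> 1"
proof -
  have "\<bar>\<Sum>i\<in>{1..n}. Z i\<bar> \<le> (\<Sum>i\<in>{1..n}. \<bar>Z i\<bar>)" by (rule sum_abs)
  also have "\<dots> \<le> real n" using sum_mono[of "{1..n}" "\<lambda>i. \<bar>Z i\<bar>" "\<lambda>_. 1"] assms by simp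
  finally show ?thesis by (cases "n = 0") (auto simp: divide_le_eq)
qed

lemma averaging_recursion_of_innovations:
  fixes Z :: "nat \<Rightarrow> real"
  assumes g: "\<bar>g\<bar> < 1" and Z_bounded: "\<And>i. i \<ge> 1 \<Longrightarrow> \<bar>Z i\<bar> \<le> 1"
    and innovations: "(\<lambda>n. (\<Sum>k\<in>{1..<n}. Z (Suc k) - (g * (\<Sum>i\<in>{1..k}. Z i) / real k + c)) / real n)
      \<longlonglongrightarrow> 0"
  shows "(\<lambda>n. (\<Sum>i\<in>{1..n}. Z i) / real n) \<longlonglongrightarrow> c / (1 - g)"
proof -
  define y where "y n = (\<Sum>i\<in>{1..n}. Z i) / real n" for n
  define D where "D n = (\<Sum>k\<in>{1..<n}. Z (Suc k) - (g * (\<Sum>i\<in>{1..k}. Z i) / real k + c))" for n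
  define e where "e n = (Z 1 + c * (real n - 1) + D n) / real n" for n
  have recursion: "y n = g * (\<Sum>k\<in>{1..<n}. y k) / real n + e n" if n: "n \<ge> 1" for n
  proof -
    have "D n = (\<Sum>k\<in>{1..<n}. Z (Suc k)) - g * (\<Sum>k\<in>{1..<n}. y k) - c * (real n - 1)"
      using n by (simp add: D_def y_def sum_subtractf sum.distrib sum_distrib_left of_nat_diff)
    then have S: "(\<Sum>i\<in>{1..n}. Z i) = Z 1 + (g * (\<Sum>k\<in>{1..<n}. y k) + c * (real n - 1) + D n)"
      unfolding sum_atLeastAtMost_split_first[OF n] by simp
    show ?thesis unfolding y_def[of n] S e_def using n by (simp add: field_simps)
  qed
  have y_bounded: "\<bar>y n\<bar> \<le> 1" for n
    unfolding y_def using Z_bounded by (rule abs_average_le_1)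
  have "(\<lambda>n. D n / real n + c * (1 - 1 / real n) + Z 1 * (1 / real n)) \<longlonglongrightarrow> 0 + c * (1 - 0) + Z 1 * 0"
    using innovations unfolding D_def by (intro tendsto_intros lim_const_over_n)
  then have "(\<lambda>n. D n / real n + c * (1 - 1 / real n) + Z 1 * (1 / real n)) \<longlonglongrightarrow> c" by simp
  then have "e \<longlonglongrightarrow> c"
    by (rule Lim_transform_eventually[OF _ eventually_mono[OF eventually_ge_at_top[of 1]]])
      (auto simp: e_def field_simps)
  then show ?thesis
    using averaging_recursion_tendsto[OF g y_bounded recursion] unfolding y_def by simp
qed

section \<open>Strong laws for bounded orthogonal increments\<close>

lemma integrable_bounded:
  fixes f :: "'a \<Rightarrow> real"
  assumes "finite_measure M" "f \<in> borel_measurable M" "\<And>\<omega>. \<omega> \<in> space M \<Longrightarrow> \<bar>f \<omega>\<bar> \<le> B"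
  shows "integrable M f"
  by (rule finite_measure.integrable_const_bound[where B=B]) (use assms in auto)

lemma integrable_bounded_mult:
  fixes f g :: "'a \<Rightarrow> real"
  assumes "finite_measure M" "f \<in> borel_measurable M" "g \<in> borel_measurable M"
    and "\<And>\<omega>. \<omega> \<in> space M \<Longrightarrow> \<bar>f \<omega>\<bar> \<le> Bf" "\<And>\<omega>. \<omega> \<in> space M \<Longrightarrow> \<bar>g \<omega>\<bar> \<le> Bg"
  shows "integrable M (\<lambda>\<omega>. f \<omega> * g \<omega>)"
proof (rule integrable_bounded[where B="Bf * Bg"])
  fix \<omega> assume "\<omega> \<in> space M"
  then show "\<bar>f \<omega> * g \<omega>\<bar> \<le> Bf * Bg"
    using assms(4,5)[of \<omega>] by (simp add: abs_mult mult_mono')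
qed (use assms in auto)

lemma power4_add_le:
  fixes a d b :: real
  assumes "\<bar>d\<bar> \<le> b"
  shows "(a + d)^4 \<le> a^4 + 4 * (a^3 * d) + (8 * b^2 * a^2 + 3 * b^4)"
proof -
  have expand: "(a + d)^4 = a^4 + 4 * (a^3 * d) + (6 * (a^2 * d^2) + 4 * (a * d^3) + d^4)"
    by (simp add: numeral_eq_Suc algebra_simps)
  have "\<bar>d\<bar>^2 \<le> b^2" by (rule power_mono) (use assms in auto)
  then have d2: "a^2 * d^2 \<le> a^2 * b^2" by (simp add: mult_left_mono)
  have "\<bar>d\<bar>^3 \<le> b^3" by (rule power_mono) (use assms in auto)
  then have "\<bar>a\<bar> * \<bar>d\<bar>^3 \<le> \<bar>a\<bar> * b^3" by (intro mult_left_mono) auto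
  then have d3: "a * d^3 \<le> \<bar>a\<bar> * b^3" by (metis abs_ge_self abs_mult order.trans power_abs)
  have "0 \<le> (\<bar>a\<bar> * b - b^2)^2" by simp
  then have am_gm: "2 * (\<bar>a\<bar> * b^3) \<le> a^2 * b^2 + b^4"
    by (simp add: power2_eq_square power3_eq_cube power4_eq_xxxx algebra_simps)
  have "\<bar>d\<bar>^4 \<le> b^4" by (rule power_mono) (use assms in auto)
  then have d4: "d^4 \<le> b^4" by (simp add: power_abs)
  show ?thesis unfolding expand using d2 d3 am_gm d4 by (simp add: algebra_simps)
qed

lemma integrable_partial_sum_power_mult:
  fixes D :: "nat \<Rightarrow> 'a \<Rightarrow> real"
  assumes "finite_measure M" "\<And>k. D k \<in> borel_measurable M"
    and bounded: "\<And>k \<omega>. \<omega> \<in> space M \<Longrightarrow> \<bar>D k \<omega>\<bar> \<le> B"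
  shows "integrable M (\<lambda>\<omega>. (\<Sum>k<n. D k \<omega>) ^ j * D n \<omega> ^ i)"
proof (rule integrable_bounded_mult[where Bf="(real n * B)^j" and Bg="B^i"])
  fix \<omega> assume \<omega>: "\<omega> \<in> space M"
  have "\<bar>\<Sum>k<n. D k \<omega>\<bar> \<le> (\<Sum>k<n. \<bar>D k \<omega>\<bar>)" by (rule sum_abs)
  also have "\<dots> \<le> real n * B" using sum_mono[of "{..<n}" "\<lambda>k. \<bar>D k \<omega>\<bar>" "\<lambda>_. B"] bounded[OF \<omega>] by simp
  finally show "\<bar>(\<Sum>k<n. D k \<omega>) ^ j\<bar> \<le> (real n * B)^j"
    unfolding power_abs by (intro power_mono) auto
  show "\<bar>D n \<omega> ^ i\<bar> \<le> B^i" unfolding power_abs using bounded[OF \<omega>] by (intro power_mono) auto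
qed (use assms in auto)

lemma second_moment_orthogonal_increments:
  fixes D :: "nat \<Rightarrow> 'a \<Rightarrow> real"
  assumes "prob_space M" and meas: "\<And>k. D k \<in> borel_measurable M"
    and bounded: "\<And>k \<omega>. \<omega> \<in> space M \<Longrightarrow> \<bar>D k \<omega>\<bar> \<le> B"
    and orth1: "\<And>n. (\<integral>\<omega>. (\<Sum>k<n. D k \<omega>) * D n \<omega> \<partial>M) = 0"
  shows "(\<integral>\<omega>. (\<Sum>k<n. D k \<omega>) ^ 2 \<partial>M) \<le> B^2 * real n"
proof (induction n)
  case (Suc n)
  interpret prob_space M by fact
  have int: "integrable M (\<lambda>\<omega>. (\<Sum>k<m. D k \<omega>) ^ j * D m \<omega> ^ i)" for m j i
    using meas bounded by (intro integrable_partial_sum_power_mult) auto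
  have "(\<integral>\<omega>. (\<Sum>k<Suc n. D k \<omega>) ^ 2 \<partial>M)
      = (\<integral>\<omega>. (\<Sum>k<n. D k \<omega>) ^ 2 * D n \<omega> ^ 0 + 2 * ((\<Sum>k<n. D k \<omega>) ^ 1 * D n \<omega> ^ 1)
          + (\<Sum>k<n. D k \<omega>) ^ 0 * D n \<omega> ^ 2 \<partial>M)"
    by (simp add: power2_eq_square algebra_simps)
  also have "\<dots> = (\<integral>\<omega>. (\<Sum>k<n. D k \<omega>) ^ 2 \<partial>M) + 2 * 0 + (\<integral>\<omega>. D n \<omega> ^ 2 \<partial>M)"
    using int[of n 2 0] int[of n 1 1] int[of n 0 2] orth1[of n] by simp
  also have "(\<integral>\<omega>. D n \<omega> ^ 2 \<partial>M) \<le> (\<integral>\<omega>. B^2 \<partial>M)"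
    using int[of n 0 2] bounded by (intro integral_mono) (auto intro: order.trans[OF _ abs_ge_self] simp: abs_le_square_iff[symmetric])
  finally show ?case using Suc by (simp add: prob_space algebra_simps)
qed simp

lemma fourth_moment_orthogonal_increments:
  fixes D :: "nat \<Rightarrow> 'a \<Rightarrow> real"
  assumes "prob_space M" and meas: "\<And>k. D k \<in> borel_measurable M"
    and bounded: "\<And>k \<omega>. \<omega> \<in> space M \<Longrightarrow> \<bar>D k \<omega>\<bar> \<le> B"
    and orth1: "\<And>n. (\<integral>\<omega>. (\<Sum>k<n. D k \<omega>) * D n \<omega> \<partial>M) = 0"
    and orth3: "\<And>n. (\<integral>\<omega>. (\<Sum>k<n. D k \<omega>)^3 * D n \<omega> \<partial>M) = 0"
  shows "(\<integral>\<omega>. (\<Sum>k<n. D k \<omega>) ^ 4 \<partial>M) \<le> 4 * B^4 * real n ^ 2"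
proof (induction n)
  case (Suc n)
  interpret prob_space M by fact
  have int: "integrable M (\<lambda>\<omega>. (\<Sum>k<m. D k \<omega>) ^ j * D m \<omega> ^ i)" for m j i
    using meas bounded by (intro integrable_partial_sum_power_mult) auto
  define T where "T \<omega> = (\<Sum>k<n. D k \<omega>)" for \<omega>
  have "(\<integral>\<omega>. (\<Sum>k<Suc n. D k \<omega>) ^ 4 \<partial>M)
      \<le> (\<integral>\<omega>. T \<omega> ^ 4 * D n \<omega> ^ 0 + 4 * (T \<omega> ^ 3 * D n \<omega> ^ 1) + (8 * B^2 * (T \<omega> ^ 2 * D n \<omega> ^ 0) + 3 * B^4) \<partial>M)"
    using int[of n 4 0] int[of n 3 1] int[of n 2 0] int[of "Suc n" 4 0] bounded
    by (intro integral_mono) (auto simp: T_def intro!: power4_add_le)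
  also have "\<dots> = (\<integral>\<omega>. T \<omega> ^ 4 \<partial>M) + 4 * 0 + (8 * B^2 * (\<integral>\<omega>. T \<omega> ^ 2 \<partial>M) + 3 * B^4)"
    using int[of n 4 0] int[of n 3 1] int[of n 2 0] orth3[of n] by (simp add: prob_space T_def)
  also have "\<dots> \<le> 4 * B^4 * real n ^ 2 + 8 * B^4 * real n + 3 * B^4"
    using Suc mult_left_mono[OF second_moment_orthogonal_increments[OF assms(1-4)], of "8 * B^2" n]
    by (simp add: T_def power2_eq_square power4_eq_xxxx mult.assoc)
  also have "\<dots> \<le> 4 * B^4 * real (Suc n) ^ 2"
    by (simp add: power2_eq_square algebra_simps)
  finally show ?case .
qed simp

lemma AE_eventually_abs_le_of_fourth_moment:
  fixes T :: "nat \<Rightarrow> 'a \<Rightarrow> real"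
  assumes "prob_space M" and [measurable]: "\<And>n. T n \<in> borel_measurable M"
    and int: "\<And>n. integrable M (\<lambda>\<omega>. T n \<omega> ^ 4)"
    and moment: "\<And>n. (\<integral>\<omega>. T n \<omega> ^ 4 \<partial>M) \<le> K * real n ^ 2"
    and e: "e > 0"
  shows "AE \<omega> in M. eventually (\<lambda>n. \<bar>T (Suc n) \<omega>\<bar> \<le> e * real (Suc n)) sequentially"
proof -
  interpret prob_space M by fact
  define A where "A n = {\<omega>\<in>space M. e * real (Suc n) < \<bar>T (Suc n) \<omega>\<bar>}" for n
  have A_sets[measurable]: "A n \<in> sets M" for n unfolding A_def by measurable
  have prob_A: "measure M (A n) \<le> (K / e^4) * inverse (real (Suc n) ^ 2)" for n
  proof -
    define c where "c = (e * real (Suc n))^4"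
    have c: "c > 0" unfolding c_def using e by simp
    have "A n \<subseteq> {\<omega>\<in>space M. c \<le> T (Suc n) \<omega> ^ 4}"
    proof
      fix \<omega> assume "\<omega> \<in> A n"
      then have "\<omega> \<in> space M" and "e * real (Suc n) < \<bar>T (Suc n) \<omega>\<bar>" unfolding A_def by auto
      moreover from this(2) have "(e * real (Suc n))^4 \<le> \<bar>T (Suc n) \<omega>\<bar>^4"
        using e by (intro power_mono) auto
      ultimately show "\<omega> \<in> {\<omega>\<in>space M. c \<le> T (Suc n) \<omega> ^ 4}" by (simp add: c_def power_abs)
    qed
    then have "measure M (A n) \<le> measure M {\<omega>\<in>space M. c \<le> T (Suc n) \<omega> ^ 4}"
      by (intro finite_measure_mono) auto
    also have "\<dots> \<le> (\<integral>\<omega>. T (Suc n) \<omega> ^ 4 \<partial>M) / c"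
      by (rule integral_Markov_inequality_measure[where A="space M"]) (use int c in auto)
    also have "\<dots> \<le> K * real (Suc n) ^ 2 / c"
      by (rule divide_right_mono) (use moment[of "Suc n"] c in auto)
    also have "\<dots> = (K / e^4) * inverse (real (Suc n) ^ 2)"
    proof -
      have cancel: "x * N / (y * (N * N)) = x / y * inverse N" if "N > 0" for x y N :: real
        using that by (simp add: divide_inverse)
      have c_eq: "c = e^4 * (real (Suc n) ^ 2 * real (Suc n) ^ 2)"
        unfolding c_def by (simp add: power_mult_distrib flip: power_add)
      show ?thesis unfolding c_eq by (rule cancel) simp
    qed
    finally show ?thesis .
  qed
  have "summable (\<lambda>n. inverse (real (Suc n) ^ 2))"
    using inverse_power_summable[of 2] by (subst summable_Suc_iff) auto
  then have "summable (\<lambda>n. (K / e^4) * inverse (real (Suc n) ^ 2))"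
    by (rule summable_mult)
  then have "summable (\<lambda>n. measure M (A n))"
    by (rule summable_comparison_test'[where N=0]) (use prob_A in auto)
  then have "AE \<omega> in M. eventually (\<lambda>n. \<omega> \<in> space M - A n) sequentially"
    by (intro borel_cantelli_AE1) (auto simp: less_top[symmetric])
  then show ?thesis
    by (rule AE_mp) (auto simp: A_def elim!: eventually_mono)
qed

text \<open>The fourth moment bound \<open>O(n\<^sup>2)\<close> makes the tail probabilities \<open>P(|T\<^sub>n| > \<epsilon> n) = O(n\<^sup>-\<^sup>2)\<close>
  summable, so Borel--Cantelli applies for every \<open>\<epsilon> = 1/(m+1)\<close>.\<close>
lemma AE_tendsto_zero_of_fourth_moment:
  fixes T :: "nat \<Rightarrow> 'a \<Rightarrow> real"
  assumes "prob_space M" and "\<And>n. T n \<in> borel_measurable M"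
    and "\<And>n. integrable M (\<lambda>\<omega>. T n \<omega> ^ 4)"
    and "\<And>n. (\<integral>\<omega>. T n \<omega> ^ 4 \<partial>M) \<le> K * real n ^ 2"
  shows "AE \<omega> in M. (\<lambda>n. T n \<omega> / real n) \<longlonglongrightarrow> 0"
proof -
  interpret prob_space M by fact
  have "AE \<omega> in M. \<forall>m. eventually (\<lambda>n. \<bar>T (Suc n) \<omega>\<bar> \<le> 1 / real (Suc m) * real (Suc n)) sequentially"
    by (subst AE_all_countable) (intro allI AE_eventually_abs_le_of_fourth_moment[OF assms], simp)
  then show ?thesis
  proof (rule AE_mp, intro AE_I2 impI)
    fix \<omega> assume small: "\<forall>m. eventually (\<lambda>n. \<bar>T (Suc n) \<omega>\<bar> \<le> 1 / real (Suc m) * real (Suc n)) sequentially"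
    have "(\<lambda>n. T (Suc n) \<omega> / real (Suc n)) \<longlonglongrightarrow> 0"
    proof (rule LIMSEQ_I)
      fix \<epsilon> :: real assume "\<epsilon> > 0"
      then obtain m where m: "1 / real (Suc m) < \<epsilon>"
        by (metis reals_Archimedean inverse_eq_divide)
      from small[rule_format, of m] obtain N
        where N: "\<And>n. n \<ge> N \<Longrightarrow> \<bar>T (Suc n) \<omega>\<bar> \<le> 1 / real (Suc m) * real (Suc n)"
        unfolding eventually_sequentially by blast
      have "\<bar>T (Suc n) \<omega>\<bar> / real (Suc n) \<le> 1 / real (Suc m)" if "n \<ge> N" for n
        using N[OF that] by (simp add: divide_le_eq del: of_nat_Suc)
      then show "\<exists>N. \<forall>n\<ge>N. norm (T (Suc n) \<omega> / real (Suc n) - 0) < \<epsilon>"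
        using m by (auto intro: le_less_trans)
    qed
    then show "(\<lambda>n. T n \<omega> / real n) \<longlonglongrightarrow> 0" by (rule LIMSEQ_imp_Suc)
  qed
qed

lemma strong_law_orthogonal_increments:
  fixes D :: "nat \<Rightarrow> 'a \<Rightarrow> real"
  assumes "prob_space M"
    and meas: "\<And>k. D k \<in> borel_measurable M"
    and bounded: "\<And>k \<omega>. \<omega> \<in> space M \<Longrightarrow> \<bar>D k \<omega>\<bar> \<le> B"
    and "\<And>n. (\<integral>\<omega>. (\<Sum>k<n. D k \<omega>) * D n \<omega> \<partial>M) = 0"
    and "\<And>n. (\<integral>\<omega>. (\<Sum>k<n. D k \<omega>)^3 * D n \<omega> \<partial>M) = 0"
  shows "AE \<omega> in M. (\<lambda>n. (\<Sum>k<n. D k \<omega>) / real n) \<longlonglongrightarrow> 0"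
proof (rule AE_tendsto_zero_of_fourth_moment[OF assms(1)])
  show "(\<lambda>\<omega>. \<Sum>k<n. D k \<omega>) \<in> borel_measurable M" for n using meas by measurable
  show "integrable M (\<lambda>\<omega>. (\<Sum>k<n. D k \<omega>) ^ 4)" for n
    using integrable_partial_sum_power_mult[OF prob_space.finite_measure[OF assms(1)] meas bounded,
        where n=n and j=4 and i=0]
    by simp
qed (rule fourth_moment_orthogonal_increments[OF assms])

section \<open>Natural filtrations and conditional expectations\<close>

lemma space_nat_filt: "space (nat_filt M X n) = space M"
  unfolding nat_filt_def by (rule space_measure_of) auto

lemma sets_nat_filt:
  "sets (nat_filt M X n) = sigma_sets (space M) (\<Union>i\<in>{1..n}. {X i -` A \<inter> space M | A. A \<in> sets borel})"
  unfolding nat_filt_def by (rule sets_measure_of) auto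

lemma subalgebra_nat_filt:
  assumes "\<And>i. X i \<in> borel_measurable M"
  shows "subalgebra M (nat_filt M X n)"
  unfolding subalgebra_def space_nat_filt sets_nat_filt
  using assms by (auto intro!: sets.sigma_sets_subset measurable_sets)

lemma sigma_finite_subalgebra_nat_filt:
  assumes "finite_measure M" "\<And>i. X i \<in> borel_measurable M"
  shows "sigma_finite_subalgebra M (nat_filt M X n)"
  using assms subalgebra_nat_filt[OF assms(2)]
  by (intro finite_measure_subalgebra_is_sigma_finite)
    (simp add: finite_measure_subalgebra_def finite_measure_subalgebra_axioms_def)

lemma measurable_nat_filt:
  assumes "1 \<le> i" "i \<le> n"
  shows "X i \<in> borel_measurable (nat_filt M X n)"
proof (rule measurableI)
  fix A :: "real set" assume "A \<in> sets borel"
  then have "X i -` A \<inter> space M \<in> (\<Union>i\<in>{1..n}. {X i -` A \<inter> space M | A. A \<in> sets borel})"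
    using assms by (intro UN_I[of i]) auto
  then show "X i -` A \<inter> space (nat_filt M X n) \<in> sets (nat_filt M X n)"
    unfolding sets_nat_filt space_nat_filt by (rule sigma_sets.Basic)
qed simp

lemma partial_sum_measurable_nat_filt:
  assumes "k \<le> n"
  shows "partial_sum X k \<in> borel_measurable (nat_filt M X n)"
proof -
  have [measurable]: "X i \<in> borel_measurable (nat_filt M X n)" if "i \<in> {1..k}" for i
    using measurable_nat_filt[of i n X M] that assms by auto
  show ?thesis unfolding partial_sum_def[abs_def] by (intro borel_measurable_sum) measurable
qed

lemma real_cnt: "real (cnt X c n \<omega>) = (\<Sum>i\<in>{1..n}. if X i \<omega> = c then 1 else 0)"
  unfolding cnt_def by (simp add: sum.inter_filter[symmetric])

lemma cnt_le: "cnt X c n \<omega> \<le> n"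
proof -
  have "cnt X c n \<omega> \<le> card {1..n}" unfolding cnt_def by (rule card_mono) auto
  then show ?thesis by simp
qed

lemma partial_sum_Suc: "partial_sum X (Suc k) \<omega> = partial_sum X k \<omega> + X (Suc k) \<omega>"
  unfolding partial_sum_def by simp

context sigma_finite_subalgebra
begin

lemma real_cond_exp_square_deviation:
  fixes f e :: "'a \<Rightarrow> real"
  assumes "finite_measure M"
    and f: "f \<in> borel_measurable M" "\<And>\<omega>. \<omega> \<in> space M \<Longrightarrow> \<bar>f \<omega>\<bar> \<le> Bf"
    and e: "e \<in> borel_measurable F" "\<And>\<omega>. \<omega> \<in> space M \<Longrightarrow> \<bar>e \<omega>\<bar> \<le> Be"
    and cond_exp: "AE \<omega> in M. real_cond_exp M F f \<omega> = e \<omega>"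
  shows "AE \<omega> in M. real_cond_exp M F (\<lambda>\<omega>. (f \<omega> - e \<omega>)^2) \<omega>
      = real_cond_exp M F (\<lambda>\<omega>. f \<omega>^2) \<omega> - e \<omega>^2"
proof -
  have [measurable]: "f \<in> borel_measurable M" "e \<in> borel_measurable F" "e \<in> borel_measurable M"
    using f(1) e(1) by (auto intro: measurable_from_subalg[OF subalg])
  have int_f2: "integrable M (\<lambda>\<omega>. f \<omega> * f \<omega>)"
    using assms by (intro integrable_bounded_mult) auto
  have int_ef: "integrable M (\<lambda>\<omega>. (-2 * e \<omega>) * f \<omega>)"
    using assms by (intro integrable_bounded_mult[where Bf="2 * Be"]) (auto simp: abs_mult)
  have int_e2: "integrable M (\<lambda>\<omega>. e \<omega> * e \<omega>)"
    using assms by (intro integrable_bounded_mult) auto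
  have "AE \<omega> in M. real_cond_exp M F (\<lambda>\<omega>. (f \<omega> - e \<omega>)^2) \<omega>
      = real_cond_exp M F (\<lambda>\<omega>. (f \<omega> * f \<omega> + (-2 * e \<omega>) * f \<omega>) + e \<omega> * e \<omega>) \<omega>"
    by (rule real_cond_exp_cong) (auto simp: power2_eq_square algebra_simps)
  moreover have "AE \<omega> in M. real_cond_exp M F (\<lambda>\<omega>. (f \<omega> * f \<omega> + (-2 * e \<omega>) * f \<omega>) + e \<omega> * e \<omega>) \<omega>
      = real_cond_exp M F (\<lambda>\<omega>. f \<omega> * f \<omega>) \<omega> + real_cond_exp M F (\<lambda>\<omega>. (-2 * e \<omega>) * f \<omega>) \<omega>
        + real_cond_exp M F (\<lambda>\<omega>. e \<omega> * e \<omega>) \<omega>"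
    using real_cond_exp_add[OF Bochner_Integration.integrable_add[OF int_f2 int_ef] int_e2]
      real_cond_exp_add[OF int_f2 int_ef] by eventually_elim simp
  moreover have "AE \<omega> in M. real_cond_exp M F (\<lambda>\<omega>. (-2 * e \<omega>) * f \<omega>) \<omega> = -2 * e \<omega> * e \<omega>"
  proof -
    have "(\<lambda>\<omega>. -2 * e \<omega>) \<in> borel_measurable F" by measurable
    from real_cond_exp_mult[OF this f(1) int_ef] cond_exp show ?thesis by eventually_elim auto
  qed
  moreover have "AE \<omega> in M. real_cond_exp M F (\<lambda>\<omega>. e \<omega> * e \<omega>) \<omega> = e \<omega> * e \<omega>"
    using int_e2 by (intro real_cond_exp_F_meas) auto
  ultimately show ?thesis by eventually_elim (simp add: power2_eq_square)
qed

lemma real_cond_exp_residual_eq_0: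
  fixes f e :: "'a \<Rightarrow> real"
  assumes "finite_measure M"
    and f: "f \<in> borel_measurable M" "\<And>\<omega>. \<omega> \<in> space M \<Longrightarrow> \<bar>f \<omega>\<bar> \<le> Bf"
    and e: "e \<in> borel_measurable F" "\<And>\<omega>. \<omega> \<in> space M \<Longrightarrow> \<bar>e \<omega>\<bar> \<le> Be"
    and cond_exp: "AE \<omega> in M. real_cond_exp M F f \<omega> = e \<omega>"
  shows "AE \<omega> in M. real_cond_exp M F (\<lambda>\<omega>. f \<omega> - e \<omega>) \<omega> = 0"
proof -
  have "integrable M f" "integrable M e"
    using assms measurable_from_subalg[OF subalg e(1)] by (auto intro: integrable_bounded)
  from real_cond_exp_diff[OF this] real_cond_exp_F_meas[OF this(2) e(1)] cond_exp
  show ?thesis by eventually_elim simp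
qed

end

lemma strong_law_martingale_differences:
  fixes D :: "nat \<Rightarrow> 'a \<Rightarrow> real" and F :: "nat \<Rightarrow> 'a measure"
  assumes "prob_space M"
    and sub: "\<And>n. sigma_finite_subalgebra M (F n)"
    and adapted: "\<And>k n. k < n \<Longrightarrow> D k \<in> borel_measurable (F n)"
    and bounded: "\<And>k \<omega>. \<omega> \<in> space M \<Longrightarrow> \<bar>D k \<omega>\<bar> \<le> B"
    and cond_exp: "\<And>n. AE \<omega> in M. real_cond_exp M (F n) (D n) \<omega> = 0"
  shows "AE \<omega> in M. (\<lambda>n. (\<Sum>k<n. D k \<omega>) / real n) \<longlonglongrightarrow> 0"
proof -
  interpret prob_space M by fact
  have D_meas: "D k \<in> borel_measurable M" for k
    using measurable_from_subalg[OF sigma_finite_subalgebra.subalg[OF sub] adapted[of k "Suc k"]] by simp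
  have orthogonal: "(\<integral>\<omega>. (\<Sum>k<n. D k \<omega>) ^ j * D n \<omega> \<partial>M) = 0" for n j
  proof -
    interpret sigma_finite_subalgebra M "F n" by (rule sub)
    have [measurable]: "D k \<in> borel_measurable (F n)" if "k \<in> {..<n}" for k
      using adapted that by auto
    have "(\<integral>\<omega>. (\<Sum>k<n. D k \<omega>) ^ j * D n \<omega> \<partial>M) = (\<integral>\<omega>. (\<Sum>k<n. D k \<omega>) ^ j * real_cond_exp M (F n) (D n) \<omega> \<partial>M)"
      using integrable_partial_sum_power_mult[OF finite_measure D_meas bounded, where n=n and j=j and i=1]
      by (intro real_cond_exp_intg(2)[symmetric]) (auto simp: D_meas)
    also have "\<dots> = (\<integral>\<omega>. (\<Sum>k<n. D k \<omega>) ^ j * 0 \<partial>M)"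
      by (rule integral_cong_AE) (use cond_exp[of n] D_meas in \<open>auto elim!: eventually_mono\<close>)
    finally show ?thesis by simp
  qed
  show ?thesis
    by (rule strong_law_orthogonal_increments[OF \<open>prob_space M\<close> D_meas bounded])
      (use orthogonal[of _ 1] orthogonal[of _ 3] in simp_all)
qed

text \<open>The innovations \<open>Z\<^sub>k\<^sub>+\<^sub>1 - E[Z\<^sub>k\<^sub>+\<^sub>1 | F\<^sub>k]\<close> are bounded martingale differences.\<close>
lemma AE_average_tendsto_of_affine_cond_exp:
  fixes Z :: "nat \<Rightarrow> 'a \<Rightarrow> real" and F :: "nat \<Rightarrow> 'a measure"
  assumes "prob_space M"
    and sub: "\<And>n. sigma_finite_subalgebra M (F n)"
    and Z_adapted: "\<And>i n. 1 \<le> i \<Longrightarrow> i \<le> n \<Longrightarrow> Z i \<in> borel_measurable (F n)"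
    and Z_bounded: "\<And>i \<omega>. i \<ge> 1 \<Longrightarrow> \<omega> \<in> space M \<Longrightarrow> \<bar>Z i \<omega>\<bar> \<le> 1"
    and cond_exp: "\<And>n. n \<ge> 1 \<Longrightarrow>
      AE \<omega> in M. real_cond_exp M (F n) (Z (Suc n)) \<omega> = g * (\<Sum>i\<in>{1..n}. Z i \<omega>) / real n + c"
    and g: "\<bar>g\<bar> < 1" and gc: "\<bar>g\<bar> + \<bar>c\<bar> \<le> 1"
  shows "AE \<omega> in M. (\<lambda>n. (\<Sum>i\<in>{1..n}. Z i \<omega>) / real n) \<longlonglongrightarrow> c / (1 - g)"
proof -
  interpret prob_space M by fact
  define e where "e n \<omega> = g * (\<Sum>i\<in>{1..n}. Z i \<omega>) / real n + c" for n \<omega>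
  define D where "D k \<omega> = (if k \<ge> 1 then Z (Suc k) \<omega> - e k \<omega> else 0)" for k \<omega>
  have Z_meas: "Z i \<in> borel_measurable M" if "i \<ge> 1" for i
    using measurable_from_subalg[OF sigma_finite_subalgebra.subalg[OF sub] Z_adapted[OF that order.refl]] .
  have e_adapted[measurable]: "e k \<in> borel_measurable (F n)" if "k \<le> n" for k n
  proof -
    have [measurable]: "Z i \<in> borel_measurable (F n)" if "i \<in> {1..k}" for i
      using Z_adapted[of i n] that \<open>k \<le> n\<close> by auto
    show ?thesis unfolding e_def[abs_def] by measurable
  qed
  have e_bounded: "\<bar>e n \<omega>\<bar> \<le> 1" if "\<omega> \<in> space M" for n \<omega>
  proof -
    from mult_left_mono[OF abs_average_le_1[of "\<lambda>i. Z i \<omega>"], of "\<bar>g\<bar>"] Z_bounded[OF _ that] have "\<bar>g * (\<Sum>i\<in>{1..n}. Z i \<omega>) / real n\<bar> \<le> \<bar>g\<bar>"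
      by (simp add: abs_mult)
    then show ?thesis unfolding e_def using gc by linarith
  qed
  have "AE \<omega> in M. (\<lambda>n. (\<Sum>k<n. D k \<omega>) / real n) \<longlonglongrightarrow> 0"
  proof (rule strong_law_martingale_differences[OF \<open>prob_space M\<close> sub])
    show "D k \<in> borel_measurable (F n)" if "k < n" for k n
    proof (cases "k \<ge> 1")
      case True
      then have [measurable]: "Z (Suc k) \<in> borel_measurable (F n)" using Z_adapted that by simp
      have [measurable]: "e k \<in> borel_measurable (F n)" using that by simp
      show ?thesis unfolding D_def[abs_def] using True by simp
    qed (simp add: D_def[abs_def])
    show "\<bar>D k \<omega>\<bar> \<le> 2" if "\<omega> \<in> space M" for k \<omega>
      using Z_bounded[of "Suc k" \<omega>] e_bounded[OF that, of k] that unfolding D_def by auto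
    show "AE \<omega> in M. real_cond_exp M (F n) (D n) \<omega> = 0" for n
    proof -
      interpret sigma_finite_subalgebra M "F n" by (rule sub)
      show ?thesis
      proof (cases "n \<ge> 1")
        case True
        then have "D n = (\<lambda>\<omega>. Z (Suc n) \<omega> - e n \<omega>)" by (simp add: D_def[abs_def])
        moreover have "AE \<omega> in M. real_cond_exp M (F n) (\<lambda>\<omega>. Z (Suc n) \<omega> - e n \<omega>) \<omega> = 0"
        proof (rule real_cond_exp_residual_eq_0[where Bf=1 and Be=1])
          show "AE \<omega> in M. real_cond_exp M (F n) (Z (Suc n)) \<omega> = e n \<omega>"
            using cond_exp[OF True] by (simp add: e_def)
        qed (use Z_meas Z_bounded e_bounded e_adapted[OF order.refl] in auto)
        ultimately show ?thesis by simp
      qed (use real_cond_exp_F_meas[of "\<lambda>_. 0"] in \<open>simp add: D_def[abs_def]\<close>)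
    qed
  qed
  moreover have "(\<Sum>k<n. D k \<omega>) = (\<Sum>k\<in>{1..<n}. Z (Suc k) \<omega> - e k \<omega>)" for n \<omega>
    by (cases n) (simp_all add: D_def lessThan_Suc_atMost atLeast0AtMost[symmetric]
        sum.atLeast_Suc_atMost atLeastLessThanSuc_atLeastAtMost)
  ultimately have "AE \<omega> in M. (\<lambda>n. (\<Sum>k\<in>{1..<n}. Z (Suc k) \<omega> - e k \<omega>) / real n) \<longlonglongrightarrow> 0"
    by simp
  with AE_space show ?thesis
    by eventually_elim
      (rule averaging_recursion_of_innovations[OF g], use Z_bounded in \<open>auto simp: e_def\<close>)
qed

section \<open>The elephant random walk\<close>

text \<open>The hypotheses of the theorem, except the law of \<open>X\<^sub>1\<close>, which does not affect any of the limits.\<close>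
locale elephant_walk = prob_space M for M :: "'a measure" +
  fixes X :: "nat \<Rightarrow> 'a \<Rightarrow> real" and p q r \<theta> :: real
  assumes pqr: "p \<ge> 0" "q \<ge> 0" "r \<ge> 0" "p + q + r = 1"
    and \<theta>: "0 \<le> \<theta>" "\<theta> < 1"
    and X_measurable[measurable]: "\<And>i. X i \<in> borel_measurable M"
    and X_values: "\<And>i \<omega>. i \<ge> 1 \<Longrightarrow> \<omega> \<in> space M \<Longrightarrow> X i \<omega> \<in> {-1, 0, 1}"
    and step_plus: "\<And>n. n \<ge> 1 \<Longrightarrow> AE \<omega> in M.
       real_cond_exp M (nat_filt M X n) (indicator {\<omega>\<in>space M. X (Suc n) \<omega> = 1}) \<omega>
       = \<theta> * (real (cnt X 1 n \<omega>) / real n * p + real (cnt X (-1) n \<omega>) / real n * q) + (1 - \<theta>) * p"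
    and step_minus: "\<And>n. n \<ge> 1 \<Longrightarrow> AE \<omega> in M.
       real_cond_exp M (nat_filt M X n) (indicator {\<omega>\<in>space M. X (Suc n) \<omega> = -1}) \<omega>
       = \<theta> * (real (cnt X (-1) n \<omega>) / real n * p + real (cnt X 1 n \<omega>) / real n * q) + (1 - \<theta>) * q"
    and step_zero: "\<And>n. n \<ge> 1 \<Longrightarrow> AE \<omega> in M.
       real_cond_exp M (nat_filt M X n) (indicator {\<omega>\<in>space M. X (Suc n) \<omega> = 0}) \<omega>
       = \<theta> * (p + q) * (real (cnt X 0 n \<omega>) / real n) + r"
begin

abbreviation "F \<equiv> nat_filt M X"
abbreviation "\<alpha> \<equiv> (p - q) * \<theta>"
abbreviation "\<omega>\<^sub>0 \<equiv> (p - q) * (1 - \<theta>)"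
abbreviation "\<tau> \<equiv> (1 - \<theta>) * (p + q)"
abbreviation "\<gamma> \<equiv> (p + q) * \<theta>"
abbreviation "\<phi> \<equiv> \<tau> / (1 - \<gamma>) - (\<omega>\<^sub>0 / (1 - \<alpha>))^2"

definition cond_mean :: "nat \<Rightarrow> 'a \<Rightarrow> real" where
  "cond_mean n \<omega> = \<alpha> * partial_sum X n \<omega> / real n + \<omega>\<^sub>0"

definition cond_var :: "nat \<Rightarrow> 'a \<Rightarrow> real" where
  "cond_var n \<omega> = \<gamma> * (1 - real (cnt X 0 n \<omega>) / real n) + \<tau> - (cond_mean n \<omega>)^2"

definition ind :: "nat \<Rightarrow> real \<Rightarrow> 'a \<Rightarrow> real" where
  "ind n c = indicator {\<omega>\<in>space M. X n \<omega> = c}"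

lemma sigma_finite_subalgebra_F: "sigma_finite_subalgebra M (F n)"
  by (rule sigma_finite_subalgebra_nat_filt) simp_all

lemma measurable_F_imp_measurable: "f \<in> borel_measurable (F n) \<Longrightarrow> f \<in> borel_measurable M"
  by (rule measurable_from_subalg[OF subalgebra_nat_filt[of X M n]]) simp_all

text \<open>Stated in the shape \<open>ind n 1 + s * ind n (-1)\<close> whose conditional expectation is computed below.\<close>
lemma X_eq_ind:
  assumes "\<omega> \<in> space M" "n \<ge> 1"
  shows "X n \<omega> = ind n 1 \<omega> + (-1) * ind n (-1) \<omega>" "X n \<omega> ^ 2 = ind n 1 \<omega> + 1 * ind n (-1) \<omega>"
  using X_values[OF assms(2,1)] assms(1) by (auto simp: ind_def)

lemma X_bounded: "\<omega> \<in> space M \<Longrightarrow> i \<ge> 1 \<Longrightarrow> \<bar>X i \<omega>\<bar> \<le> 1"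
  using X_values[of i \<omega>] by auto

lemma cnt_eq_sum_ind: "\<omega> \<in> space M \<Longrightarrow> real (cnt X c n \<omega>) = (\<Sum>i\<in>{1..n}. ind i c \<omega>)"
  unfolding real_cnt by (intro sum.cong) (auto simp: ind_def)

lemma cnt_sum:
  assumes "\<omega> \<in> space M"
  shows "real (cnt X 1 n \<omega>) + real (cnt X (-1) n \<omega>) + real (cnt X 0 n \<omega>) = real n"
proof -
  have "real (cnt X 1 n \<omega>) + real (cnt X (-1) n \<omega>) + real (cnt X 0 n \<omega>)
      = (\<Sum>i\<in>{1..n}. ind i 1 \<omega> + ind i (-1) \<omega> + ind i 0 \<omega>)"
    using assms by (simp add: cnt_eq_sum_ind sum.distrib)
  also have "\<dots> = (\<Sum>i\<in>{1..n}. 1)"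
    using X_values[of _ \<omega>] assms by (intro sum.cong) (auto simp: ind_def indicator_def)
  finally show ?thesis by simp
qed

lemma partial_sum_cnt:
  assumes "\<omega> \<in> space M"
  shows "partial_sum X n \<omega> = real (cnt X 1 n \<omega>) - real (cnt X (-1) n \<omega>)"
  using assms unfolding partial_sum_def cnt_eq_sum_ind[OF assms] sum_subtractf[symmetric]
  by (intro sum.cong) (auto simp: X_eq_ind(1))

lemma partial_sum_bounded: "\<omega> \<in> space M \<Longrightarrow> \<bar>partial_sum X n \<omega>\<bar> \<le> real n"
  using partial_sum_cnt[of \<omega> n] cnt_le[of X 1 n \<omega>] cnt_le[of X "-1" n \<omega>] by linarith

lemma partial_sum_measurable[measurable]: "partial_sum X k \<in> borel_measurable M"
  using measurable_F_imp_measurable[OF partial_sum_measurable_nat_filt[of k k X M]] by simp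

lemma ind_measurable[measurable]: "ind n c \<in> borel_measurable M"
  unfolding ind_def by measurable

lemma ind_integrable: "integrable M (ind n c)"
  by (rule integrable_bounded[where B=1]) (auto simp: ind_def indicator_def)

lemma ind_measurable_F:
  assumes "1 \<le> i" "i \<le> n"
  shows "ind i c \<in> borel_measurable (F n)"
proof -
  have [measurable]: "X i \<in> borel_measurable (F n)" by (rule measurable_nat_filt[OF assms])
  show ?thesis unfolding ind_def space_nat_filt[of M X n, symmetric] by measurable
qed

lemma cond_mean_measurable_F: "cond_mean n \<in> borel_measurable (F n)"
  unfolding cond_mean_def[abs_def] using partial_sum_measurable_nat_filt[of n n X M] by measurable

lemma cond_mean_measurable[measurable]: "cond_mean n \<in> borel_measurable M"
  by (rule measurable_F_imp_measurable[OF cond_mean_measurable_F])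

lemma alpha_bounds: "\<bar>\<alpha>\<bar> < 1" "\<bar>\<alpha>\<bar> + \<bar>\<omega>\<^sub>0\<bar> \<le> 1"
proof -
  have pq: "\<bar>p - q\<bar> \<le> 1" using pqr by auto
  have "\<bar>\<alpha>\<bar> = \<bar>p - q\<bar> * \<theta>" "\<bar>\<omega>\<^sub>0\<bar> = \<bar>p - q\<bar> * (1 - \<theta>)" using \<theta> by (simp_all add: abs_mult)
  then have "\<bar>\<alpha>\<bar> + \<bar>\<omega>\<^sub>0\<bar> = \<bar>p - q\<bar>" by (simp add: algebra_simps)
  then show "\<bar>\<alpha>\<bar> + \<bar>\<omega>\<^sub>0\<bar> \<le> 1" using pq by simp
  have "\<bar>\<alpha>\<bar> \<le> 1 * \<theta>" using mult_right_mono[OF pq \<theta>(1)] \<theta> by (simp add: abs_mult)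
  then show "\<bar>\<alpha>\<bar> < 1" using \<theta> by simp
qed

lemma gamma_bounds: "\<bar>\<gamma>\<bar> < 1" "\<bar>\<gamma>\<bar> + \<bar>r\<bar> \<le> 1"
proof -
  have pq: "0 \<le> p + q" "p + q \<le> 1" using pqr by auto
  have "\<gamma> \<le> (p + q) * 1" using pq \<theta> by (intro mult_left_mono) auto
  moreover have "\<gamma> < 1"
    using pq \<theta> by (cases "p + q = 0") (auto intro: le_less_trans[OF mult_left_le_one_le])
  ultimately show "\<bar>\<gamma>\<bar> < 1" "\<bar>\<gamma>\<bar> + \<bar>r\<bar> \<le> 1" using pqr pq \<theta> by auto
qed

lemma cond_mean_bounded: "\<omega> \<in> space M \<Longrightarrow> \<bar>cond_mean n \<omega>\<bar> \<le> 1"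
proof -
  assume "\<omega> \<in> space M"
  then have "\<bar>partial_sum X n \<omega> / real n\<bar> \<le> 1"
    using partial_sum_bounded[of \<omega> n] by (cases "n = 0") (auto simp: divide_le_eq)
  then have "\<bar>\<alpha>\<bar> * \<bar>partial_sum X n \<omega> / real n\<bar> \<le> \<bar>\<alpha>\<bar> * 1" by (intro mult_left_mono) auto
  then have "\<bar>\<alpha> * partial_sum X n \<omega> / real n\<bar> \<le> \<bar>\<alpha>\<bar>" by (simp add: abs_mult)
  then show ?thesis unfolding cond_mean_def using alpha_bounds by linarith
qed

lemma cond_exp_ind_combination:
  assumes n: "n \<ge> 1"
  shows "AE \<omega> in M. real_cond_exp M (F n) (\<lambda>\<omega>. ind (Suc n) 1 \<omega> + s * ind (Suc n) (-1) \<omega>) \<omega>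
    = \<theta> * (real (cnt X 1 n \<omega>) / real n * p + real (cnt X (-1) n \<omega>) / real n * q) + (1 - \<theta>) * p
      + s * (\<theta> * (real (cnt X (-1) n \<omega>) / real n * p + real (cnt X 1 n \<omega>) / real n * q) + (1 - \<theta>) * q)"
proof -
  interpret sigma_finite_subalgebra M "F n" by (rule sigma_finite_subalgebra_F)
  have "integrable M (ind (Suc n) 1)" "integrable M (ind (Suc n) (-1))"
    by (simp_all add: ind_integrable)
  from real_cond_exp_add[OF this(1) integrable_mult_right[OF this(2), of s]] real_cond_exp_cmult[OF this(2), of s]
    step_plus[OF n] step_minus[OF n]
  show ?thesis by eventually_elim (simp add: ind_def)
qed

lemma cond_exp_X:
  assumes n: "n \<ge> 1"
  shows "AE \<omega> in M. real_cond_exp M (F n) (X (Suc n)) \<omega> = cond_mean n \<omega>"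
proof -
  interpret sigma_finite_subalgebra M "F n" by (rule sigma_finite_subalgebra_F)
  have "AE \<omega> in M. real_cond_exp M (F n) (X (Suc n)) \<omega>
      = real_cond_exp M (F n) (\<lambda>\<omega>. ind (Suc n) 1 \<omega> + (-1) * ind (Suc n) (-1) \<omega>) \<omega>"
    by (rule real_cond_exp_cong) (auto simp: X_eq_ind(1))
  then show ?thesis using cond_exp_ind_combination[OF n, of "-1"] AE_space
  proof eventually_elim
    case (elim \<omega>)
    show ?case
      using n unfolding elim(1) elim(2) cond_mean_def partial_sum_cnt[OF elim(3)] by (simp add: field_simps)
  qed
qed

lemma cond_exp_X_square:
  assumes n: "n \<ge> 1"
  shows "AE \<omega> in M. real_cond_exp M (F n) (\<lambda>\<omega>. X (Suc n) \<omega> ^ 2) \<omega>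
      = \<gamma> * (1 - real (cnt X 0 n \<omega>) / real n) + \<tau>"
proof -
  interpret sigma_finite_subalgebra M "F n" by (rule sigma_finite_subalgebra_F)
  have "AE \<omega> in M. real_cond_exp M (F n) (\<lambda>\<omega>. X (Suc n) \<omega> ^ 2) \<omega>
      = real_cond_exp M (F n) (\<lambda>\<omega>. ind (Suc n) 1 \<omega> + 1 * ind (Suc n) (-1) \<omega>) \<omega>"
    by (rule real_cond_exp_cong) (auto simp: X_eq_ind(2))
  then show ?thesis using cond_exp_ind_combination[OF n, of 1] AE_space
  proof eventually_elim
    case (elim \<omega>)
    have cnt_plus: "real (cnt X 1 n \<omega>) = real n - real (cnt X 0 n \<omega>) - real (cnt X (-1) n \<omega>)"
      using cnt_sum[OF elim(3), of n] by linarith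
    show ?case
      using n unfolding elim(1) elim(2) cnt_plus by (simp add: field_simps)
  qed
qed

lemma cond_exp_square_deviation:
  assumes n: "n \<ge> 1"
  shows "AE \<omega> in M. real_cond_exp M (F n) (\<lambda>\<omega>. (X (Suc n) \<omega> - cond_mean n \<omega>) ^ 2) \<omega> = cond_var n \<omega>"
proof -
  interpret sigma_finite_subalgebra M "F n" by (rule sigma_finite_subalgebra_F)
  have "AE \<omega> in M. real_cond_exp M (F n) (\<lambda>\<omega>. (X (Suc n) \<omega> - cond_mean n \<omega>) ^ 2) \<omega>
      = real_cond_exp M (F n) (\<lambda>\<omega>. X (Suc n) \<omega> ^ 2) \<omega> - cond_mean n \<omega> ^ 2"
    by (rule real_cond_exp_square_deviation[where Bf=1 and Be=1])
      (use X_bounded cond_mean_bounded cond_mean_measurable_F cond_exp_X[OF n] in auto)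
  with cond_exp_X_square[OF n] show ?thesis
    by eventually_elim (simp add: cond_var_def)
qed

lemma cond_variance_X:
  assumes n: "n \<ge> 1"
  shows "AE \<omega> in M. real_cond_exp M (F n)
      (\<lambda>\<omega>'. (X (Suc n) \<omega>' - real_cond_exp M (F n) (X (Suc n)) \<omega>') ^ 2) \<omega> = cond_var n \<omega>"
proof -
  interpret sigma_finite_subalgebra M "F n" by (rule sigma_finite_subalgebra_F)
  have "AE \<omega> in M. real_cond_exp M (F n)
      (\<lambda>\<omega>'. (X (Suc n) \<omega>' - real_cond_exp M (F n) (X (Suc n)) \<omega>') ^ 2) \<omega>
      = real_cond_exp M (F n) (\<lambda>\<omega>. (X (Suc n) \<omega> - cond_mean n \<omega>) ^ 2) \<omega>"
    using cond_exp_X[OF n] by (intro real_cond_exp_cong) (auto elim!: eventually_mono)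
  with cond_exp_square_deviation[OF n] show ?thesis by eventually_elim simp
qed

lemma AE_zero_frequency_tendsto: "AE \<omega> in M. (\<lambda>n. real (cnt X 0 n \<omega>) / real n) \<longlonglongrightarrow> r / (1 - \<gamma>)"
proof -
  have "AE \<omega> in M. (\<lambda>n. (\<Sum>i\<in>{1..n}. ind i 0 \<omega>) / real n) \<longlonglongrightarrow> r / (1 - \<gamma>)"
  proof (rule AE_average_tendsto_of_affine_cond_exp[OF prob_space_axioms sigma_finite_subalgebra_F
        ind_measurable_F _ _ gamma_bounds])
    show "\<bar>ind i 0 \<omega>\<bar> \<le> 1" for i \<omega> by (simp add: ind_def indicator_def)
    fix n :: nat assume n: "n \<ge> 1"
    show "AE \<omega> in M. real_cond_exp M (F n) (ind (Suc n) 0) \<omega> = \<gamma> * (\<Sum>i\<in>{1..n}. ind i 0 \<omega>) / real n + r"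
      using step_zero[OF n] AE_space by eventually_elim (simp add: ind_def cnt_eq_sum_ind)
  qed
  with AE_space show ?thesis by eventually_elim (simp add: cnt_eq_sum_ind)
qed

lemma AE_partial_sum_average_tendsto:
  "AE \<omega> in M. (\<lambda>n. partial_sum X n \<omega> / real n) \<longlonglongrightarrow> \<omega>\<^sub>0 / (1 - \<alpha>)"
  unfolding partial_sum_def
  by (rule AE_average_tendsto_of_affine_cond_exp[OF prob_space_axioms sigma_finite_subalgebra_F
        measurable_nat_filt X_bounded _ alpha_bounds])
    (use cond_exp_X in \<open>auto simp: cond_mean_def partial_sum_def\<close>)

lemma AE_cond_var_tendsto: "AE \<omega> in M. (\<lambda>n. cond_var n \<omega>) \<longlonglongrightarrow> \<phi>"
  using AE_zero_frequency_tendsto AE_partial_sum_average_tendsto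
proof eventually_elim
  case (elim \<omega>)
  have "(\<lambda>n. \<gamma> * (1 - real (cnt X 0 n \<omega>) / real n) + \<tau> - (\<alpha> * (partial_sum X n \<omega> / real n) + \<omega>\<^sub>0)^2)
     \<longlonglongrightarrow> \<gamma> * (1 - r / (1 - \<gamma>)) + \<tau> - (\<alpha> * (\<omega>\<^sub>0 / (1 - \<alpha>)) + \<omega>\<^sub>0)^2"
    by (intro tendsto_intros elim)
  moreover have "\<gamma> * (1 - r / (1 - \<gamma>)) + \<tau> = \<tau> / (1 - \<gamma>)"
  proof -
    have key: "g * (1 - r / (1 - g)) + t = t / (1 - g)" if "t = 1 - r - g" "g \<noteq> 1" for g t :: real
      using that(2) unfolding that(1) by (simp add: field_simps)
    show ?thesis by (rule key) (use pqr(4) gamma_bounds(1) in \<open>auto simp: algebra_simps\<close>)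
  qed
  moreover have "\<alpha> * (\<omega>\<^sub>0 / (1 - \<alpha>)) + \<omega>\<^sub>0 = \<omega>\<^sub>0 / (1 - \<alpha>)"
    using alpha_bounds(1) by (simp add: field_simps)
  ultimately show ?case unfolding cond_var_def cond_mean_def by (simp add: times_divide_eq_right)
qed

lemma AE_cond_variance_tendsto:
  "AE \<omega> in M. (\<lambda>n. real_cond_exp M (F n)
      (\<lambda>\<omega>'. (X (Suc n) \<omega>' - real_cond_exp M (F n) (X (Suc n)) \<omega>')^2) \<omega>) \<longlonglongrightarrow> \<phi>"
proof -
  have "AE \<omega> in M. \<forall>n\<ge>1. real_cond_exp M (F n)
      (\<lambda>\<omega>'. (X (Suc n) \<omega>' - real_cond_exp M (F n) (X (Suc n)) \<omega>')^2) \<omega> = cond_var n \<omega>"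
    unfolding AE_all_countable using cond_variance_X by (auto intro: AE_mp)
  with AE_cond_var_tendsto show ?thesis
  proof eventually_elim
    case (elim \<omega>)
    show ?case
      by (rule Lim_transform_eventually[OF elim(1) eventually_mono[OF eventually_ge_at_top[of 1]]])
        (use elim(2) in auto)
  qed
qed

lemma expectation_partial_sum_Suc:
  assumes k: "k \<ge> 1"
  shows "expectation (partial_sum X (Suc k)) = (1 + \<alpha> / real k) * expectation (partial_sum X k) + \<omega>\<^sub>0"
proof -
  interpret sigma_finite_subalgebra M "F k" by (rule sigma_finite_subalgebra_F)
  have int_S: "integrable M (partial_sum X k)"
    by (rule integrable_bounded[where B="real k"]) (auto intro: partial_sum_bounded)
  have int_X: "integrable M (X (Suc k))"
    by (rule integrable_bounded[where B=1]) (auto intro: X_bounded)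
  have "expectation (X (Suc k)) = expectation (real_cond_exp M (F k) (X (Suc k)))"
    by (rule real_cond_exp_int(2)[OF int_X, symmetric])
  also have "\<dots> = expectation (\<lambda>\<omega>. (\<alpha> / real k) * partial_sum X k \<omega> + \<omega>\<^sub>0)"
    using cond_exp_X[OF k] by (intro integral_cong_AE) (auto simp: cond_mean_def elim!: eventually_mono)
  also have "\<dots> = (\<alpha> / real k) * expectation (partial_sum X k) + \<omega>\<^sub>0"
    using int_S by (simp add: prob_space)
  finally show ?thesis
    using int_S int_X by (simp add: partial_sum_Suc[abs_def] algebra_simps)
qed

text \<open>Since \<open>E S\<^sub>k\<^sub>+\<^sub>1 = (1 + \<alpha>/k) E S\<^sub>k + \<omega>\<^sub>0\<close> and \<open>a\<^sub>k\<^sub>+\<^sub>1 = (1 + \<alpha>/k) a\<^sub>k\<close>, the increment of the martingale is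
  the innovation \<open>X\<^sub>k\<^sub>+\<^sub>1 - E[X\<^sub>k\<^sub>+\<^sub>1 | F\<^sub>k]\<close> scaled by \<open>1/a\<^sub>k\<^sub>+\<^sub>1\<close>.\<close>
lemma mart_Suc_diff:
  assumes k: "k \<ge> 1" and \<alpha>: "\<alpha> \<ge> 0"
  shows "mart M X \<alpha> (Suc k) \<omega> - mart M X \<alpha> k \<omega> = (X (Suc k) \<omega> - cond_mean k \<omega>) / a_seq \<alpha> (Suc k)"
proof -
  define E where "E = expectation (partial_sum X k)"
  define A where "A = a_seq \<alpha> k"
  define f where "f = 1 + \<alpha> / real k"
  have A: "A > 0" and f: "f > 0" using a_seq_pos[OF \<alpha>] \<alpha> k by (auto simp: A_def f_def add_pos_nonneg)
  have mart_Suc: "mart M X \<alpha> (Suc k) \<omega> = (partial_sum X k \<omega> + X (Suc k) \<omega> - (f * E + \<omega>\<^sub>0)) / (A * f)"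
    unfolding mart_def using expectation_partial_sum_Suc[OF k] a_seq_Suc[OF k]
    by (simp add: E_def A_def f_def partial_sum_Suc)
  have mart_k: "mart M X \<alpha> k \<omega> = (partial_sum X k \<omega> - E) / A"
    unfolding mart_def using k by (simp add: E_def A_def)
  have cond_mean_k: "cond_mean k \<omega> = (f - 1) * partial_sum X k \<omega> + \<omega>\<^sub>0"
    unfolding cond_mean_def f_def by simp
  have a_Suc: "a_seq \<alpha> (Suc k) = A * f" unfolding A_def f_def by (rule a_seq_Suc[OF k])
  have "(s + x - (f * E + c)) / (A * f) - (s - E) / A = (x - ((f - 1) * s + c)) / (A * f)"
    for s x c :: real
    using A f by (simp add: field_simps)
  then show ?thesis unfolding mart_Suc mart_k cond_mean_k a_Suc .
qed

lemma cond_exp_mart_increment_square: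
  assumes k: "k \<ge> 1" and \<alpha>: "\<alpha> \<ge> 0"
  shows "AE \<omega> in M. real_cond_exp M (F k) (\<lambda>\<omega>'. (mart M X \<alpha> (Suc k) \<omega>' - mart M X \<alpha> k \<omega>')^2) \<omega>
     = cond_var k \<omega> / (a_seq \<alpha> (Suc k))^2"
proof -
  interpret sigma_finite_subalgebra M "F k" by (rule sigma_finite_subalgebra_F)
  have [measurable]: "mart M X \<alpha> n \<in> borel_measurable M" for n
    unfolding mart_def[abs_def] by measurable
  have int: "integrable M (\<lambda>\<omega>. (X (Suc k) \<omega> - cond_mean k \<omega>)^2)"
  proof -
    have "\<bar>X (Suc k) \<omega> - cond_mean k \<omega>\<bar> \<le> 2" if "\<omega> \<in> space M" for \<omega>
      using abs_triangle_ineq4[of "X (Suc k) \<omega>" "cond_mean k \<omega>"]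
        X_bounded[OF that, of "Suc k"] cond_mean_bounded[OF that, of k] by linarith
    then show ?thesis unfolding power2_eq_square by (intro integrable_bounded_mult) auto
  qed
  have "AE \<omega> in M. real_cond_exp M (F k) (\<lambda>\<omega>'. (mart M X \<alpha> (Suc k) \<omega>' - mart M X \<alpha> k \<omega>')^2) \<omega>
     = real_cond_exp M (F k) (\<lambda>\<omega>. (X (Suc k) \<omega> - cond_mean k \<omega>)^2 / (a_seq \<alpha> (Suc k))^2) \<omega>"
    by (rule real_cond_exp_cong) (auto simp: mart_Suc_diff[OF k \<alpha>] power_divide)
  with real_cond_exp_cdiv[OF int] cond_exp_square_deviation[OF k] show ?thesis
    by eventually_elim simp
qed

text \<open>\<open>\<langle>M\<rangle>\<^sub>n / v\<^sub>n\<close> is a weighted mean of \<open>a\<^sub>j\<^sup>2 E[(\<Delta>M\<^sub>j)\<^sup>2 | F\<^sub>j\<^sub>-\<^sub>1]\<close> with weights \<open>a\<^sub>j\<^sup>-\<^sup>2\<close>, whose sum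
  diverges for \<open>\<alpha> \<le> 1/2\<close>; the \<open>j = 1\<close> term involves the trivial \<open>F\<^sub>0\<close> and does not affect the limit.\<close>
lemma AE_qvar_tendsto:
  assumes \<alpha>: "\<alpha> \<ge> 0" "\<alpha> \<le> 1/2"
  shows "AE \<omega> in M. (\<lambda>n. qvar M X \<alpha> n \<omega> / (\<Sum>k\<in>{1..n}. 1 / (a_seq \<alpha> k)^2)) \<longlonglongrightarrow> \<phi>"
proof -
  have "AE \<omega> in M. \<forall>k\<ge>1. real_cond_exp M (F k) (\<lambda>\<omega>'. (mart M X \<alpha> (Suc k) \<omega>' - mart M X \<alpha> k \<omega>')^2) \<omega>
     = cond_var k \<omega> / (a_seq \<alpha> (Suc k))^2"
    unfolding AE_all_countable using cond_exp_mart_increment_square[OF _ \<alpha>(1)] by auto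
  with AE_cond_var_tendsto show ?thesis
  proof eventually_elim
    case (elim \<omega>)
    define Q where "Q j = real_cond_exp M (F (j - 1))
      (\<lambda>\<omega>'. (mart M X \<alpha> j \<omega>' - mart M X \<alpha> (j - 1) \<omega>')^2) \<omega>" for j
    define w where "w j = 1 / (a_seq \<alpha> j)^2" for j
    define u where "u j = Q j * (a_seq \<alpha> j)^2" for j
    have a_nonzero: "a_seq \<alpha> j \<noteq> 0" for j using a_seq_pos[OF \<alpha>(1), of j] by simp
    have qvar_eq: "qvar M X \<alpha> n \<omega> = (\<Sum>j\<in>{1..n}. w j * u j)" for n
      unfolding qvar_def Q_def[symmetric] using a_nonzero by (simp add: w_def u_def)
    have "cond_var j \<omega> = u (Suc j)" if "j \<ge> 1" for j
      using elim(2) that a_nonzero[of "Suc j"] by (simp add: u_def Q_def)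
    then have "(\<lambda>j. u (Suc j)) \<longlonglongrightarrow> \<phi>"
      by (intro Lim_transform_eventually[OF elim(1) eventually_mono[OF eventually_ge_at_top[of 1]]])
    then have "u \<longlonglongrightarrow> \<phi>" by (rule LIMSEQ_imp_Suc)
    then have "(\<lambda>n. (\<Sum>j\<in>{1..n}. w j * u j) / (\<Sum>j\<in>{1..n}. w j)) \<longlonglongrightarrow> \<phi>"
      by (intro weighted_mean_tendsto) (use sum_inverse_a_seq_square_at_top[OF \<alpha>] in \<open>auto simp: w_def\<close>)
    then show ?case unfolding qvar_eq w_def .
  qed
qed

end

theorem mainTheorem12:
  fixes M :: "'a measure" and X :: "nat \<Rightarrow> 'a \<Rightarrow> real"
    and p q r \<theta> :: real
  assumes P: "prob_space M"
    and pqr: "p \<ge> 0" "q \<ge> 0" "r \<ge> 0" "p + q + r = 1"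
    and th: "0 \<le> \<theta>" "\<theta> < 1"
    and meas: "\<And>i. X i \<in> borel_measurable M"
    and vals: "\<And>i \<omega>. i \<ge> 1 \<Longrightarrow> \<omega> \<in> space M \<Longrightarrow> X i \<omega> \<in> {-1, 0, 1}"
    and init: "measure M {\<omega>\<in>space M. X 1 \<omega> = 1} = p"
              "measure M {\<omega>\<in>space M. X 1 \<omega> = -1} = q"
              "measure M {\<omega>\<in>space M. X 1 \<omega> = 0} = r"
    and step_plus: "\<And>n. n \<ge> 1 \<Longrightarrow> AE \<omega> in M.
       real_cond_exp M (nat_filt M X n) (indicator {\<omega>\<in>space M. X (Suc n) \<omega> = 1}) \<omega>
       = \<theta> * (real (cnt X 1 n \<omega>) / real n * p + real (cnt X (-1) n \<omega>) / real n * q) + (1 - \<theta>) * p"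
    and step_minus: "\<And>n. n \<ge> 1 \<Longrightarrow> AE \<omega> in M.
       real_cond_exp M (nat_filt M X n) (indicator {\<omega>\<in>space M. X (Suc n) \<omega> = -1}) \<omega>
       = \<theta> * (real (cnt X (-1) n \<omega>) / real n * p + real (cnt X 1 n \<omega>) / real n * q) + (1 - \<theta>) * q"
    and step_zero: "\<And>n. n \<ge> 1 \<Longrightarrow> AE \<omega> in M.
       real_cond_exp M (nat_filt M X n) (indicator {\<omega>\<in>space M. X (Suc n) \<omega> = 0}) \<omega>
       = \<theta> * (p + q) * (real (cnt X 0 n \<omega>) / real n) + r"
    and alpha: "0 \<le> (p - q) * \<theta>"
  shows "(let \<alpha> = (p - q) * \<theta>; \<omega>\<^sub>0 = (p - q) * (1 - \<theta>); \<tau> = (1 - \<theta>) * (p + q);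
              \<gamma> = (p + q) * \<theta>; \<phi> = \<tau> / (1 - \<gamma>) - (\<omega>\<^sub>0 / (1 - \<alpha>))^2 in
          (AE \<omega> in M. (\<lambda>n. real_cond_exp M (nat_filt M X n)
              (\<lambda>\<omega>'. (X (Suc n) \<omega>' - real_cond_exp M (nat_filt M X n) (X (Suc n)) \<omega>')^2) \<omega>)
             \<longlonglongrightarrow> \<phi>)
          \<and> (\<alpha> \<le> 1/2 \<longrightarrow>
             (AE \<omega> in M. (\<lambda>n. qvar M X \<alpha> n \<omega> / (\<Sum>k\<in>{1..n}. 1 / (a_seq \<alpha> k)^2))
               \<longlonglongrightarrow> \<phi>)))"
proof -
  interpret elephant_walk M X p q r \<theta>
    by (rule elephant_walk.intro[OF P elephant_walk_axioms.intro[OF pqr th meas vals step_plus step_minus step_zero]])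
  show ?thesis
    unfolding Let_def using AE_cond_variance_tendsto AE_qvar_tendsto[OF alpha] by blast
qed

end
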